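(* Let $\phi$ solve $\widetilde\Box_g\phi=F$, where $g$ is a metric such that $H^{\alpha\beta}=g^{\alpha\beta}-m^{\alpha\beta}$ satisfies $|H^{L\underline L}|<\frac14$. Then at points with $r>0$, $$\Big|\Big(4\partial_s-\frac{H_{LL}}{2g^{L\underline L}}\partial_q-\frac{\overline{\mathrm{tr}}\,H+H_{L\underline L}}{2g^{L\underline L}\,r}\Big)\partial_q(r\phi)+\frac{rF}{2g^{L\underline L}}\Big|\lesssim r|\Delta_\omega\phi|+|H|_{L\mathcal T}\big(r|\bar\partial\partial\phi|+|\partial\phi|\big)+|H|\big(r|\bar\partial^2\phi|+|\bar\partial\phi|+r^{-1}|\phi|\big),$$ where $\Delta_\omega=\delta^{ij}\bar\partial_i\bar\partial_j$.
   Context: Coordinates $(t,x)$, $r=|x|$, $\omega=x/r$; $m$ Minkowski metric; indices raised/lowered with $m$, $g^{\alpha\beta}$ the inverse of $g_{\alpha\beta}$; $\widetilde\Box_g=g^{\alpha\beta}\partial_\alpha\partial_\beta$. $\partial_s=\frac12(\partial_t+\partial_r)$, $\partial_q=\frac12(\partial_r-\partial_t)$. Null frame $L=\partial_t+\partial_r$, $\underline L=\partial_t-\partial_r$, $S_1,S_2$ orthonormal tangent to spheres, $\mathcal T=\{L,S_1,S_2\}$. Lower-index frame components: $H_{XY}=m_{\alpha\mu}m_{\beta\nu}H^{\mu\nu}X^\alpha Y^\beta$. Upper frame components $\pi^{UV}$ of a tensor $\pi^{\alpha\beta}$ are defined by $\pi^{\alpha\beta}=\sum_{U,V\in\{L,\underline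 L,S_1,S_2\}}\pi^{UV}U^\alpha V^\beta$; in particular $\pi^{L\underline L}=\frac14\pi_{\underline LL}$ (so $m^{L\underline L}=-1/2$ and $g^{L\underline L}=-\frac12+H^{L\underline L}$). $\overline{\mathrm{tr}}\,H=H_{S_1S_1}+H_{S_2S_2}$; $|H|_{L\mathcal T}=\sum_{T\in\mathcal T}|H_{LT}|$; $|H|$ sum of absolute values of components. Tangential derivatives $\bar\partial_0=\partial_t+\partial_r$, $\bar\partial_i=\partial_i-\omega_i\omega^j\partial_j$; $|\bar\partial\phi|=\sum|\bar\partial_\alpha\phi|$, $|\bar\partial\partial\phi|=\sum|\bar\partial_\alpha\partial_\beta\phi|$, $|\bar\partial^2\phi|^2=\sum|\bar\partial_\alpha\bar\partial_\beta\phi|^2$. $\lesssim$ is up to an absolute constant. *)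

theory Defs
  imports "HOL-Analysis.Analysis"
begin

text \<open>Spacetime points are vectors in real^4; index 0 is time t, indices 1,2,3 are x.\<close>

definition dirv :: "(real^4 \<Rightarrow> real) \<Rightarrow> real^4 \<Rightarrow> real^4 \<Rightarrow> real" where
  "dirv f v p = deriv (\<lambda>h::real. f (p + h *\<^sub>R v)) 0"

definition pd :: "(real^4 \<Rightarrow> real) \<Rightarrow> 4 \<Rightarrow> real^4 \<Rightarrow> real" where
  "pd f a = dirv f (axis a 1)"

definition vf :: "(real^4 \<Rightarrow> real^4) \<Rightarrow> (real^4 \<Rightarrow> real) \<Rightarrow> real^4 \<Rightarrow> real" where
  "vf V f p = dirv f (V p) p"

definition C2 :: "(real^4 \<Rightarrow> real) \<Rightarrow> bool" where
  "C2 f \<longleftrightarrow> (\<forall>p. f differentiable (at p)) \<and>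
     (\<forall>a p. pd f a differentiable (at p)) \<and>
     (\<forall>a b. continuous_on UNIV (pd (pd f a) b))"

definition spat :: "real^4 \<Rightarrow> real^4" where
  "spat p = (\<chi> i. if i = 0 then 0 else p $ i)"

definition rad :: "real^4 \<Rightarrow> real" where
  "rad p = norm (spat p)"

definition omg :: "real^4 \<Rightarrow> real^4" where
  "omg p = (1 / rad p) *\<^sub>R spat p"

definition e0 :: "real^4" where
  "e0 = axis 0 1"

definition Lv :: "real^4 \<Rightarrow> real^4" where "Lv p = e0 + omg p"
definition Lbv :: "real^4 \<Rightarrow> real^4" where "Lbv p = e0 - omg p"
text \<open>d_s = (d_t + d_r)/2 and d_q = (d_r - d_t)/2 as vector fields.\<close>
definition sv :: "real^4 \<Rightarrow> real^4" where "sv p = (1/2) *\<^sub>R (e0 + omg p)"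
definition qv :: "real^4 \<Rightarrow> real^4" where "qv p = (1/2) *\<^sub>R (omg p - e0)"

definition barv :: "4 \<Rightarrow> real^4 \<Rightarrow> real^4" where
  "barv a p = (if a = 0 then Lv p else axis a 1 - (omg p $ a) *\<^sub>R omg p)"

definition mink :: "4 \<Rightarrow> 4 \<Rightarrow> real" where
  "mink a b = (if a = b then (if a = 0 then -1 else 1) else 0)"

definition mlow :: "real^4 \<Rightarrow> real^4" where
  "mlow v = (\<chi> a. (if a = 0 then -1 else 1) * v $ a)"

definition Hlow :: "(4 \<Rightarrow> 4 \<Rightarrow> real) \<Rightarrow> real^4 \<Rightarrow> real^4 \<Rightarrow> real" where
  "Hlow h X Y = (\<Sum>a\<in>UNIV. \<Sum>b\<in>UNIV. mlow X $ a * mlow Y $ b * h a b)"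

definition HupLLb :: "(4 \<Rightarrow> 4 \<Rightarrow> real) \<Rightarrow> real^4 \<Rightarrow> real" where
  "HupLLb h p = Hlow h (Lbv p) (Lv p) / 4"

definition gLLb :: "(4 \<Rightarrow> 4 \<Rightarrow> real) \<Rightarrow> real^4 \<Rightarrow> real" where
  "gLLb h p = - 1/2 + HupLLb h p"

definition boxg :: "(real^4 \<Rightarrow> 4 \<Rightarrow> 4 \<Rightarrow> real) \<Rightarrow> (real^4 \<Rightarrow> real) \<Rightarrow> real^4 \<Rightarrow> real" where
  "boxg H f p = (\<Sum>a\<in>UNIV. \<Sum>b\<in>UNIV. (mink a b + H p a b) * pd (pd f b) a p)"

definition habs :: "(4 \<Rightarrow> 4 \<Rightarrow> real) \<Rightarrow> real" where
  "habs h = (\<Sum>a\<in>UNIV. \<Sum>b\<in>UNIV. \<bar>h a b\<bar>)"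

definition HLT :: "(4 \<Rightarrow> 4 \<Rightarrow> real) \<Rightarrow> real^4 \<Rightarrow> real^4 \<Rightarrow> real^4 \<Rightarrow> real" where
  "HLT h p S1 S2 = \<bar>Hlow h (Lv p) (Lv p)\<bar> + \<bar>Hlow h (Lv p) S1\<bar> + \<bar>Hlow h (Lv p) S2\<bar>"

definition trbar :: "(4 \<Rightarrow> 4 \<Rightarrow> real) \<Rightarrow> real^4 \<Rightarrow> real^4 \<Rightarrow> real" where
  "trbar h S1 S2 = Hlow h S1 S1 + Hlow h S2 S2"

definition dabs :: "(real^4 \<Rightarrow> real) \<Rightarrow> real^4 \<Rightarrow> real" where
  "dabs f p = (\<Sum>a\<in>UNIV. \<bar>pd f a p\<bar>)"

definition bard_abs :: "(real^4 \<Rightarrow> real) \<Rightarrow> real^4 \<Rightarrow> real" where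
  "bard_abs f p = (\<Sum>a\<in>UNIV. \<bar>vf (barv a) f p\<bar>)"

definition bardd_abs :: "(real^4 \<Rightarrow> real) \<Rightarrow> real^4 \<Rightarrow> real" where
  "bardd_abs f p = (\<Sum>a\<in>UNIV. \<Sum>b\<in>UNIV. \<bar>vf (barv a) (pd f b) p\<bar>)"

definition bar2_norm :: "(real^4 \<Rightarrow> real) \<Rightarrow> real^4 \<Rightarrow> real" where
  "bar2_norm f p = sqrt (\<Sum>a\<in>UNIV. \<Sum>b\<in>UNIV. (vf (barv a) (vf (barv b) f) p)^2)"

definition lapw :: "(real^4 \<Rightarrow> real) \<Rightarrow> real^4 \<Rightarrow> real" where
  "lapw f p = (\<Sum>i\<in>UNIV - {0}. vf (barv i) (vf (barv i) f) p)"

end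

(*
  At a point with r > 0 all quantities in the estimate are linear in phi, its gradient and its
  Hessian X, which is symmetric by Schwarz's theorem.  With psi = d_q (r phi) = phi/2 + r d_q phi
  one computes d_s psi = (d_s phi + d_q phi)/2 - r X(L,Lb)/4 and d_q psi = d_q phi + r X(Lb,Lb)/4,
  while Box_g phi = Delta_omega phi + 2 d_r phi / r - X(L,Lb) + H^ab X_ab, and H^ab X_ab splits into
  frame components along the null frame {L, Lb, S1, S2} and its m-dual {-Lb/2, -L/2, S1, S2}.
  Multiplying the left-hand side by 2 g^{L Lb}, the components X(L,Lb) and X(Lb,Lb) cancel, and
  every remaining term is a component of H times a frame component of X with at least one
  tangential slot.  These are tangential derivatives: X(L,S) and X(S,T) are bar-d bar-d phi up to
  first order terms divided by r, and X(Lb,S) is a bar-d d phi.  Finally |2 g^{L Lb}| >= 1/2.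
*)

theory Submission
  imports Defs
begin

lemma exhaust_4_from_zero:
  fixes i :: 4
  shows "i = 0 \<or> i = 1 \<or> i = 2 \<or> i = 3"
  using exhaust_4[of i] by auto

lemma UNIV_4_from_zero: "UNIV = {0, 1, 2, 3::4}"
  using exhaust_4_from_zero by auto

lemma sum_4_from_zero: "sum f (UNIV::4 set) = f 0 + f 1 + f 2 + f 3"
  unfolding UNIV_4_from_zero by (simp add: ac_simps)

lemma sum_spatial_4: "sum f (UNIV - {0::4}) = f 1 + f 2 + f 3"
  unfolding UNIV_4_from_zero by (simp add: ac_simps)

lemma inner_4: "(x::real^4) \<bullet> y = x$0 * y$0 + x$1 * y$1 + x$2 * y$2 + x$3 * y$3"
  by (simp add: inner_vec_def sum_4_from_zero)

lemma abs_sum_le_card_mult: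
  fixes f :: "'a \<Rightarrow> real"
  assumes "\<And>i. i \<in> A \<Longrightarrow> \<bar>f i\<bar> \<le> B"
  shows "\<bar>sum f A\<bar> \<le> of_nat (card A) * B"
  by (rule order_trans[OF sum_abs sum_bounded_above]) (rule assms)

lemma abs_sum_spatial_le:
  fixes f :: "4 \<Rightarrow> real"
  shows "(\<And>i. \<bar>f i\<bar> \<le> B) \<Longrightarrow> \<bar>\<Sum>i\<in>UNIV - {0}. f i\<bar> \<le> 3 * B"
  using abs_sum_le_card_mult[of "UNIV - {0::4}" f B] by (simp add: card_Diff_singleton)

lemma abs_sum_4_le:
  fixes f :: "4 \<Rightarrow> real"
  shows "(\<And>i. \<bar>f i\<bar> \<le> B) \<Longrightarrow> \<bar>\<Sum>i\<in>UNIV. f i\<bar> \<le> 4 * B"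
  using abs_sum_le_card_mult[of "UNIV::4 set" f B] by simp

lemma abs_mult_le:
  fixes a b :: real
  shows "\<bar>a\<bar> \<le> A \<Longrightarrow> \<bar>b\<bar> \<le> B \<Longrightarrow> \<bar>a * b\<bar> \<le> A * B"
  by (simp add: abs_mult mult_mono' order_trans[OF abs_ge_zero])

section \<open>Directional derivatives\<close>

lemma has_real_derivative_along_line:
  assumes "(f has_derivative f') (at (y + t0 *\<^sub>R v))"
  shows "((\<lambda>t. f (y + t *\<^sub>R v)) has_real_derivative f' v) (at t0)"
proof -
  have "((\<lambda>t. y + t *\<^sub>R v) has_derivative (\<lambda>t. t *\<^sub>R v)) (at t0)"
    by (auto intro!: derivative_eq_intros)
  from has_derivative_compose[OF this assms]
  have "((\<lambda>t. f (y + t *\<^sub>R v)) has_derivative (\<lambda>t. f' (t *\<^sub>R v))) (at t0)" .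
  moreover have "(\<lambda>t. f' (t *\<^sub>R v)) = (*) (f' v)"
    using has_derivative_linear[OF assms] by (auto simp: linear_scale fun_eq_iff)
  ultimately show ?thesis
    unfolding has_field_derivative_def by simp
qed

lemma dirv_eq_derivative:
  assumes "(f has_derivative f') (at p)"
  shows "dirv f v p = f' v"
  unfolding dirv_def
  by (rule DERIV_imp_deriv, rule has_real_derivative_along_line) (use assms in simp)

lemma dirv_has_real_derivative:
  assumes "f differentiable (at (y + t0 *\<^sub>R v))"
  shows "((\<lambda>t. f (y + t *\<^sub>R v)) has_real_derivative dirv f v (y + t0 *\<^sub>R v)) (at t0)"
proof -
  obtain f' where "(f has_derivative f') (at (y + t0 *\<^sub>R v))"
    using assms unfolding differentiable_def by blast
  then show ?thesis
    using has_real_derivative_along_line dirv_eq_derivative by metis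
qed

lemma dirv_has_real_derivative_0:
  assumes "f differentiable (at p)"
  shows "((\<lambda>t. f (p + t *\<^sub>R v)) has_real_derivative dirv f v p) (at 0)"
  using dirv_has_real_derivative[of f p 0 v] assms by simp

lemma linear_dirv:
  assumes "f differentiable (at p)"
  shows "linear (\<lambda>v. dirv f v p)"
proof -
  obtain f' where f': "(f has_derivative f') (at p)"
    using assms unfolding differentiable_def by blast
  then have "(\<lambda>v. dirv f v p) = f'"
    using dirv_eq_derivative by blast
  then show ?thesis
    using has_derivative_linear[OF f'] by simp
qed

lemma dirv_eq_sum_pd:
  assumes "f differentiable (at p)"
  shows "dirv f v p = (\<Sum>a\<in>UNIV. v $ a * pd f a p)"
proof -
  have "dirv f v p = dirv f (\<Sum>a\<in>UNIV. v $ a *\<^sub>R axis a 1) p"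
    using basis_expansion[of v] by (simp add: scalar_mult_eq_scaleR)
  then show ?thesis
    by (simp add: linear_sum[OF linear_dirv[OF assms]] linear_scale[OF linear_dirv[OF assms]] pd_def)
qed

lemma dirv_zero: "dirv f 0 p = 0"
  by (simp add: dirv_def)

lemma has_real_derivative_contraction:
  assumes "\<And>b. ((\<lambda>h. V (p + h *\<^sub>R v) $ b) has_real_derivative dV b) (at 0)"
    and "\<And>b. g b differentiable (at p)"
  shows "((\<lambda>h. \<Sum>b\<in>UNIV. V (p + h *\<^sub>R v) $ b * g b (p + h *\<^sub>R v)) has_real_derivative
           (\<Sum>b\<in>UNIV. dV b * g b p + V p $ b * dirv (g b) v p)) (at 0)"
proof (rule DERIV_sum)
  fix b
  show "((\<lambda>h. V (p + h *\<^sub>R v) $ b * g b (p + h *\<^sub>R v)) has_real_derivative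
      dV b * g b p + V p $ b * dirv (g b) v p) (at 0)"
    using DERIV_mult[OF assms(1) dirv_has_real_derivative_0[OF assms(2)]]
    by (simp add: algebra_simps)
qed

lemma C2_differentiable: "C2 f \<Longrightarrow> f differentiable (at p)"
  by (simp add: C2_def)

lemma C2_pd_differentiable: "C2 f \<Longrightarrow> pd f a differentiable (at p)"
  by (simp add: C2_def)

lemma vf_eq_sum_pd: "C2 f \<Longrightarrow> vf V f p = (\<Sum>b\<in>UNIV. V p $ b * pd f b p)"
  unfolding vf_def by (rule dirv_eq_sum_pd[OF C2_differentiable])

section \<open>Symmetry of second derivatives\<close>

lemma second_difference_mvt:
  assumes f: "C2 f" and h: "h > 0"
  shows "\<exists>\<xi>. norm (\<xi> - p) < 2 * h \<and>
    f (p + h *\<^sub>R axis a 1 + h *\<^sub>R axis b 1) - f (p + h *\<^sub>R axis a 1) - f (p + h *\<^sub>R axis b 1) + f p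
      = h * h * pd (pd f a) b \<xi>"
proof -
  let ?ea = "axis a 1 :: real^4" and ?eb = "axis b 1 :: real^4"
  define G where "G t = f ((p + h *\<^sub>R ?eb) + t *\<^sub>R ?ea) - f (p + t *\<^sub>R ?ea)" for t
  have "DERIV G t :> pd f a ((p + h *\<^sub>R ?eb) + t *\<^sub>R ?ea) - pd f a (p + t *\<^sub>R ?ea)" for t
    unfolding G_def pd_def by (intro DERIV_diff dirv_has_real_derivative C2_differentiable[OF f])
  then obtain \<theta> where th: "0 < \<theta>" "\<theta> < h"
    "G h - G 0 = h * (pd f a ((p + h *\<^sub>R ?eb) + \<theta> *\<^sub>R ?ea) - pd f a (p + \<theta> *\<^sub>R ?ea))"
    using MVT2[OF h, of G] by force
  define K where "K s = pd f a ((p + \<theta> *\<^sub>R ?ea) + s *\<^sub>R ?eb)" for s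
  have "DERIV K s :> pd (pd f a) b ((p + \<theta> *\<^sub>R ?ea) + s *\<^sub>R ?eb)" for s
    unfolding K_def pd_def[of "pd f a"] by (intro dirv_has_real_derivative C2_pd_differentiable[OF f])
  then obtain \<sigma> where sg: "0 < \<sigma>" "\<sigma> < h"
    "K h - K 0 = h * pd (pd f a) b ((p + \<theta> *\<^sub>R ?ea) + \<sigma> *\<^sub>R ?eb)"
    using MVT2[OF h, of K] by force
  define \<xi> where "\<xi> = (p + \<theta> *\<^sub>R ?ea) + \<sigma> *\<^sub>R ?eb"
  have "norm (\<xi> - p) \<le> norm (\<theta> *\<^sub>R ?ea) + norm (\<sigma> *\<^sub>R ?eb)"
    unfolding \<xi>_def by (simp add: norm_triangle_ineq del: norm_scaleR)
  also have "\<dots> < 2 * h"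
    using th sg by simp
  finally have "norm (\<xi> - p) < 2 * h" .
  moreover have "K h - K 0 = pd f a ((p + h *\<^sub>R ?eb) + \<theta> *\<^sub>R ?ea) - pd f a (p + \<theta> *\<^sub>R ?ea)"
    unfolding K_def by (simp add: ac_simps)
  then have "G h - G 0 = h * h * pd (pd f a) b \<xi>"
    using th(3) sg(3) unfolding \<xi>_def by simp
  moreover have "G h - G 0 = f (p + h *\<^sub>R ?ea + h *\<^sub>R ?eb) - f (p + h *\<^sub>R ?ea) - f (p + h *\<^sub>R ?eb) + f p"
    unfolding G_def by (simp add: ac_simps)
  ultimately show ?thesis by metis
qed

text \<open>Both mixed partials are limits of the same second difference quotient, by
  \<open>second_difference_mvt\<close> and continuity.\<close>

lemma pd_pd_commute:
  assumes f: "C2 f"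
  shows "pd (pd f a) b p = pd (pd f b) a p"
proof (rule ccontr)
  let ?X1 = "pd (pd f a) b p" and ?X2 = "pd (pd f b) a p"
  assume "?X1 \<noteq> ?X2"
  define e where "e = \<bar>?X1 - ?X2\<bar> / 2"
  have e: "e > 0" using \<open>?X1 \<noteq> ?X2\<close> by (simp add: e_def)
  have "continuous_on UNIV (pd (pd f a) b)" "continuous_on UNIV (pd (pd f b) a)"
    using f by (auto simp: C2_def)
  then obtain d1 d2 where d1: "d1 > 0" "\<And>y. dist y p < d1 \<Longrightarrow> dist (pd (pd f a) b y) ?X1 < e"
    and d2: "d2 > 0" "\<And>y. dist y p < d2 \<Longrightarrow> dist (pd (pd f b) a y) ?X2 < e"
    using e unfolding continuous_on_iff by (metis UNIV_I)
  define h where "h = min d1 d2 / 4"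
  have h: "h > 0" using d1 d2 by (simp add: h_def)
  have swap: "p + h *\<^sub>R axis b 1 + h *\<^sub>R axis a 1 = p + h *\<^sub>R axis a 1 + h *\<^sub>R axis b 1"
    by (simp add: ac_simps)
  obtain \<xi> where \<xi>: "norm (\<xi> - p) < 2 * h"
    "f (p + h *\<^sub>R axis a 1 + h *\<^sub>R axis b 1) - f (p + h *\<^sub>R axis a 1) - f (p + h *\<^sub>R axis b 1) + f p
      = h * h * pd (pd f a) b \<xi>"
    using second_difference_mvt[OF f h] by blast
  obtain \<eta> where \<eta>: "norm (\<eta> - p) < 2 * h"
    "f (p + h *\<^sub>R axis a 1 + h *\<^sub>R axis b 1) - f (p + h *\<^sub>R axis b 1) - f (p + h *\<^sub>R axis a 1) + f p
      = h * h * pd (pd f b) a \<eta>"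
    using second_difference_mvt[OF f h, of p b a] unfolding swap by blast
  have "h * h * pd (pd f a) b \<xi> = h * h * pd (pd f b) a \<eta>"
    using \<xi>(2) \<eta>(2) by linarith
  note \<xi>(1) \<eta>(1) this
  moreover have "dist \<xi> p < d1" "dist \<eta> p < d2"
    using calculation h_def d1 d2 by (simp_all add: dist_norm)
  ultimately have "\<bar>pd (pd f a) b \<xi> - ?X1\<bar> < e" "\<bar>pd (pd f b) a \<eta> - ?X2\<bar> < e"
    and "pd (pd f a) b \<xi> = pd (pd f b) a \<eta>"
    using d1(2)[of \<xi>] d2(2)[of \<eta>] h by (simp_all add: dist_real_def)
  then show False
    unfolding e_def by (auto simp: abs_less_iff abs_if split: if_splits)
qed

section \<open>The radial frame\<close>

lemma spat_add: "spat (x + y) = spat x + spat y"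
  by (simp add: spat_def vec_eq_iff)

lemma spat_scaleR: "spat (c *\<^sub>R x) = c *\<^sub>R spat x"
  by (simp add: spat_def vec_eq_iff)

lemma spat_nth: "spat v $ k = (if k = 0 then 0 else v $ k)"
  by (simp add: spat_def)

lemma omg_nth_0: "omg y $ 0 = 0"
  by (simp add: omg_def spat_def)

lemma e0_nth: "e0 $ b = (if b = 0 then 1 else 0)"
  by (simp add: e0_def axis_def)

lemma Lv_nth: "Lv p $ a = e0 $ a + omg p $ a"
  by (simp add: Lv_def)

lemma Lbv_nth: "Lbv p $ a = e0 $ a - omg p $ a"
  by (simp add: Lbv_def)

lemma barv_nth:
  "barv j y $ b = (if j = 0 then e0 $ b + omg y $ b else axis j 1 $ b - omg y $ j * omg y $ b)"
  by (simp add: barv_def Lv_def)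

lemma qv_nth: "qv y $ b = (omg y $ b - e0 $ b) / 2"
  by (simp add: qv_def)

lemma sv_eq_Lv: "sv p = (1/2) *\<^sub>R Lv p"
  by (simp add: sv_def Lv_def)

lemma qv_eq_Lbv: "qv p = (-1/2) *\<^sub>R Lbv p"
  by (simp add: qv_def Lbv_def algebra_simps)

lemma barv_0: "barv 0 y = Lv y"
  by (simp add: barv_def)

lemma barv_spatial: "i \<noteq> 0 \<Longrightarrow> barv i p = axis i 1 - (omg p $ i) *\<^sub>R omg p"
  by (simp add: barv_def)

lemma norm_omg: "rad y > 0 \<Longrightarrow> norm (omg y) = 1"
  by (simp add: omg_def rad_def)

lemma inner_omg_self: "rad y > 0 \<Longrightarrow> omg y \<bullet> omg y = 1"
  using norm_omg by (simp add: dot_square_norm)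

lemma abs_omg_nth_le: "rad y > 0 \<Longrightarrow> \<bar>omg y $ b\<bar> \<le> 1"
  using component_le_norm_cart[of "omg y" b] norm_omg[of y] by simp

lemma spat_Lv: "spat (Lv p) = 1 *\<^sub>R omg p"
  by (simp add: vec_eq_iff spat_nth Lv_def e0_nth omg_nth_0)

lemma spat_sv: "spat (sv y) = (1/2) *\<^sub>R omg y"
  by (simp add: vec_eq_iff spat_nth sv_def e0_nth omg_nth_0)

lemma spat_qv: "spat (qv y) = (1/2) *\<^sub>R omg y"
  by (simp add: vec_eq_iff spat_nth qv_nth e0_nth omg_nth_0)

lemma spat_barv: "i \<noteq> 0 \<Longrightarrow> spat (barv i p) = barv i p"
  by (simp add: vec_eq_iff spat_nth barv_nth omg_nth_0 axis_def)

lemma inner_omg_barv: "rad p > 0 \<Longrightarrow> i \<noteq> 0 \<Longrightarrow> omg p \<bullet> barv i p = 0"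
  using inner_omg_self[of p] by (simp add: barv_spatial inner_diff_right inner_axis)

lemma sum_barv_spatial:
  assumes "S $ 0 = 0"
  shows "(\<Sum>i\<in>UNIV - {0}. S $ i *\<^sub>R barv i p) = S - (S \<bullet> omg p) *\<^sub>R omg p"
proof -
  have "(\<Sum>i\<in>UNIV - {0}. S $ i *\<^sub>R barv i p) $ k = (S - (S \<bullet> omg p) *\<^sub>R omg p) $ k" for k
    using exhaust_4_from_zero[of k] assms
    by (auto simp: sum_spatial_4 barv_nth inner_4 omg_nth_0 axis_def algebra_simps)
  then show ?thesis by (simp add: vec_eq_iff)
qed

lemma sum_tangent_barv:
  assumes "S $ 0 = 0" "S \<bullet> omg p = 0"
  shows "(\<Sum>i\<in>UNIV - {0}. S $ i *\<^sub>R barv i p) = S"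
  using sum_barv_spatial[OF assms(1)] assms(2) by simp

lemma sum_spatial_mult_nth:
  fixes T x :: "real^4"
  shows "T $ 0 = 0 \<Longrightarrow> (\<Sum>j\<in>UNIV - {0}. T $ j * x $ j) = x \<bullet> T"
  by (simp add: sum_spatial_4 inner_4 mult.commute)

lemma omg_eq_sum_axis: "omg p = (\<Sum>i\<in>UNIV - {0}. omg p $ i *\<^sub>R axis i 1)"
  using basis_expansion[of "omg p"]
  by (simp add: sum_4_from_zero sum_spatial_4 omg_nth_0 scalar_mult_eq_scaleR)

lemma abs_Lv_nth_le: "rad p > 0 \<Longrightarrow> \<bar>Lv p $ a\<bar> \<le> 1"
  using abs_omg_nth_le[of p a] omg_nth_0[of p] by (cases "a = 0") (auto simp: Lv_nth e0_nth)

lemma abs_Lbv_nth_le: "rad p > 0 \<Longrightarrow> \<bar>Lbv p $ a\<bar> \<le> 1"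
  using abs_omg_nth_le[of p a] omg_nth_0[of p] by (cases "a = 0") (auto simp: Lbv_nth e0_nth)

lemma abs_qv_nth_le: "rad p > 0 \<Longrightarrow> \<bar>qv p $ a\<bar> \<le> 1"
  using abs_omg_nth_le[of p a] by (auto simp: qv_nth e0_nth)

lemma abs_nth_le_1: "norm (S::real^4) = 1 \<Longrightarrow> \<bar>S $ a\<bar> \<le> 1"
  using component_le_norm_cart[of S a] by simp

lemma rad_has_real_derivative:
  assumes "rad p > 0"
  shows "((\<lambda>h. rad (p + h *\<^sub>R v)) has_real_derivative (omg p \<bullet> spat v)) (at 0)"
proof -
  have "spat p \<noteq> 0" using assms by (auto simp: rad_def)
  have "((\<lambda>h. norm (spat p + h *\<^sub>R spat v)) has_real_derivative (sgn (spat p) \<bullet> spat v)) (at 0)"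
    using has_real_derivative_along_line[of norm "\<lambda>y. y \<bullet> sgn (spat p)" "spat p" 0 "spat v"]
      has_derivative_norm[OF \<open>spat p \<noteq> 0\<close>] by (simp add: inner_commute)
  moreover have "sgn (spat p) = omg p"
    by (simp add: sgn_div_norm omg_def rad_def divide_inverse_commute)
  ultimately show ?thesis by (simp add: rad_def spat_add spat_scaleR)
qed

definition omg_dirv :: "real^4 \<Rightarrow> real^4 \<Rightarrow> 4 \<Rightarrow> real" where
  "omg_dirv v p k = (spat v $ k - (omg p \<bullet> spat v) * omg p $ k) / rad p"

lemma omg_has_real_derivative:
  assumes "rad p > 0"
  shows "((\<lambda>h. omg (p + h *\<^sub>R v) $ k) has_real_derivative omg_dirv v p k) (at 0)"
proof -
  have "(\<lambda>h. omg (p + h *\<^sub>R v) $ k) = (\<lambda>h. (spat p $ k + h * spat v $ k) / rad (p + h *\<^sub>R v))"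
    by (simp add: omg_def spat_add spat_scaleR fun_eq_iff divide_inverse_commute)
  moreover have "((\<lambda>h. spat p $ k + h * spat v $ k) has_real_derivative spat v $ k) (at 0)"
    by (auto intro!: derivative_eq_intros)
  note DERIV_divide[OF this rad_has_real_derivative[OF assms, of v]]
  moreover have "(spat v $ k * rad p - spat p $ k * (omg p \<bullet> spat v)) / (rad p * rad p)
      = omg_dirv v p k"
    using assms by (simp add: omg_dirv_def omg_def field_simps)
  ultimately show ?thesis
    using assms by simp
qed

lemma omg_dirv_radial: "rad p > 0 \<Longrightarrow> spat v = c *\<^sub>R omg p \<Longrightarrow> omg_dirv v p k = 0"
  by (simp add: omg_dirv_def inner_omg_self)

lemma omg_dirv_barv: "rad p > 0 \<Longrightarrow> i \<noteq> 0 \<Longrightarrow> omg_dirv (barv i p) p k = barv i p $ k / rad p"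
  by (simp add: omg_dirv_def spat_barv inner_omg_barv)

definition barv_dirv :: "4 \<Rightarrow> real^4 \<Rightarrow> real^4 \<Rightarrow> 4 \<Rightarrow> real" where
  "barv_dirv j v p b = (if j = 0 then omg_dirv v p b
     else - (omg_dirv v p j * omg p $ b + omg p $ j * omg_dirv v p b))"

lemma barv_has_real_derivative:
  assumes "rad p > 0"
  shows "((\<lambda>h. barv j (p + h *\<^sub>R v) $ b) has_real_derivative barv_dirv j v p b) (at 0)"
proof (cases "j = 0")
  case True
  then show ?thesis
    using DERIV_add[OF DERIV_const omg_has_real_derivative[OF assms, of v b]]
    by (simp add: barv_nth barv_dirv_def)
next
  case False
  then show ?thesis
    using DERIV_diff[OF DERIV_const DERIV_mult[OF omg_has_real_derivative[OF assms, of v j]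
        omg_has_real_derivative[OF assms, of v b]]]
    by (simp add: barv_nth barv_dirv_def algebra_simps)
qed

lemma qv_has_real_derivative:
  assumes "rad p > 0"
  shows "((\<lambda>h. qv (p + h *\<^sub>R v) $ b) has_real_derivative omg_dirv v p b / 2) (at 0)"
  using DERIV_cdivide[OF DERIV_diff[OF omg_has_real_derivative[OF assms, of v b] DERIV_const[of "e0 $ b"]], of 2]
  by (simp add: qv_nth)

section \<open>Bilinear forms and the null frame\<close>

definition bform :: "(4 \<Rightarrow> 4 \<Rightarrow> real) \<Rightarrow> real^4 \<Rightarrow> real^4 \<Rightarrow> real" where
  "bform X U V = (\<Sum>a\<in>UNIV. \<Sum>b\<in>UNIV. U $ a * V $ b * X a b)"

lemma bform_add_left: "bform X (U + U') V = bform X U V + bform X U' V"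
  by (simp add: bform_def algebra_simps sum.distrib)

lemma bform_add_right: "bform X U (V + V') = bform X U V + bform X U V'"
  by (simp add: bform_def algebra_simps sum.distrib)

lemma bform_diff_left: "bform X (U - U') V = bform X U V - bform X U' V"
  by (simp add: bform_def algebra_simps sum_subtractf)

lemma bform_diff_right: "bform X U (V - V') = bform X U V - bform X U V'"
  by (simp add: bform_def algebra_simps sum_subtractf)

lemma bform_scaleR_left: "bform X (c *\<^sub>R U) V = c * bform X U V"
  by (simp add: bform_def algebra_simps sum_distrib_left)

lemma bform_scaleR_right: "bform X U (c *\<^sub>R V) = c * bform X U V"
  by (simp add: bform_def algebra_simps sum_distrib_left)

lemma bform_minus_left: "bform X (- U) V = - bform X U V"
  using bform_scaleR_left[of X "-1" U V] by simp

lemma bform_minus_right: "bform X U (- V) = - bform X U V"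
  using bform_scaleR_right[of X U "-1" V] by simp

lemma bform_zero_left: "bform X 0 V = 0"
  by (simp add: bform_def)

lemma bform_sum_left: "bform X (\<Sum>k\<in>A. c k *\<^sub>R U k) V = (\<Sum>k\<in>A. c k * bform X (U k) V)"
  by (induction A rule: infinite_finite_induct)
    (simp_all add: bform_zero_left bform_add_left bform_scaleR_left)

lemma bform_zero_right: "bform X U 0 = 0"
  by (simp add: bform_def)

lemma bform_sum_right: "bform X U (\<Sum>k\<in>A. c k *\<^sub>R V k) = (\<Sum>k\<in>A. c k * bform X U (V k))"
  by (induction A rule: infinite_finite_induct)
    (simp_all add: bform_zero_right bform_add_right bform_scaleR_right)

lemma bform_sym: "(\<And>a b. X a b = X b a) \<Longrightarrow> bform X U V = bform X V U"
  unfolding bform_def by (subst sum.swap) (simp add: ac_simps)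

lemma bform_axis: "bform X (axis a 1) (axis b 1) = X a b"
  using exhaust_4_from_zero[of a] exhaust_4_from_zero[of b]
  by (auto simp: bform_def axis_def sum_4_from_zero)

lemma sum_mult_sum_eq_bform: "(\<Sum>b\<in>UNIV. V $ b * (\<Sum>a\<in>UNIV. U $ a * X a b)) = bform X U V"
  unfolding bform_def by (subst sum.swap) (simp add: sum_distrib_left ac_simps)

lemma bform_tangent_left:
  assumes "S $ 0 = 0" "S \<bullet> omg p = 0"
  shows "bform X S V = (\<Sum>i\<in>UNIV - {0}. S $ i * bform X (barv i p) V)"
proof -
  have "bform X S V = bform X (\<Sum>i\<in>UNIV - {0}. S $ i *\<^sub>R barv i p) V"
    by (simp only: sum_tangent_barv[OF assms])
  then show ?thesis
    by (simp only: bform_sum_left)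
qed

lemma bform_tangent_right:
  assumes "T $ 0 = 0" "T \<bullet> omg p = 0"
  shows "bform X U T = (\<Sum>j\<in>UNIV - {0}. T $ j * bform X U (barv j p))"
proof -
  have "bform X U T = bform X U (\<Sum>j\<in>UNIV - {0}. T $ j *\<^sub>R barv j p)"
    by (simp only: sum_tangent_barv[OF assms])
  then show ?thesis
    by (simp only: bform_sum_right)
qed

lemma inner_tangent_left:
  assumes "S $ 0 = 0" "S \<bullet> omg p = 0"
  shows "S \<bullet> T = (\<Sum>i\<in>UNIV - {0}. S $ i * (barv i p \<bullet> T))"
proof -
  have "S \<bullet> T = (\<Sum>i\<in>UNIV - {0}. S $ i *\<^sub>R barv i p) \<bullet> T"
    by (simp only: sum_tangent_barv[OF assms])
  then show ?thesis
    by (simp add: inner_sum_left)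
qed

lemma Hlow_eq_bform: "Hlow h u v = bform h (mlow u) (mlow v)"
  by (simp add: Hlow_def bform_def)

lemma mlow_scaleR: "mlow (c *\<^sub>R v) = c *\<^sub>R mlow v"
  by (simp add: mlow_def vec_eq_iff)

lemma mlow_nth: "mlow v $ c = (if c = 0 then - v $ c else v $ c)"
  by (simp add: mlow_def)

lemma Hlow_scaleR_left: "Hlow h (c *\<^sub>R u) v = c * Hlow h u v"
  by (simp add: Hlow_eq_bform mlow_scaleR bform_scaleR_left)

lemma Hlow_scaleR_right: "Hlow h u (c *\<^sub>R v) = c * Hlow h u v"
  by (simp add: Hlow_eq_bform mlow_scaleR bform_scaleR_right)

lemma Hlow_minus_left: "Hlow h (- u) v = - Hlow h u v"
  using Hlow_scaleR_left[of h "-1" u v] by simp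

lemma Hlow_minus_right: "Hlow h u (- v) = - Hlow h u v"
  using Hlow_scaleR_right[of h u "-1" v] by simp

lemma Hlow_sym: "(\<And>a b. h a b = h b a) \<Longrightarrow> Hlow h u v = Hlow h v u"
  unfolding Hlow_eq_bform by (rule bform_sym)

lemma abs_Hlow_le_habs:
  assumes "\<And>a. \<bar>u $ a\<bar> \<le> 1" "\<And>b. \<bar>v $ b\<bar> \<le> 1"
  shows "\<bar>Hlow h u v\<bar> \<le> habs h"
proof -
  have "\<bar>mlow u $ a * mlow v $ b * h a b\<bar> \<le> 1 * 1 * \<bar>h a b\<bar>" for a b
    using assms[of a] assms(2)[of b] unfolding abs_mult
    by (intro mult_mono) (auto simp: mlow_nth)
  then show ?thesis
    unfolding Hlow_def habs_def
    by (intro order_trans[OF sum_abs sum_mono] order_trans[OF sum_abs sum_mono]) simp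
qed

text \<open>If the frame \<open>U\<close> and the covectors \<open>A\<close> are dual, \<open>\<Sum>\<^sub>k U\<^sub>k \<otimes> A\<^sub>k\<close> is the identity,
  and the full contraction of two tensors splits into frame components.\<close>

lemma contraction_dual_frames:
  fixes U A :: "4 \<Rightarrow> real^4"
  assumes dual: "\<And>a c. (\<Sum>k\<in>UNIV. U k $ a * A k $ c) = (if a = c then 1 else 0)"
  shows "(\<Sum>a\<in>UNIV. \<Sum>b\<in>UNIV. H a b * X a b) =
         (\<Sum>k\<in>UNIV. \<Sum>l\<in>UNIV. bform H (A k) (A l) * bform X (U k) (U l))"
proof -
  have axis_eq: "axis c 1 = (\<Sum>k\<in>UNIV. A k $ c *\<^sub>R U k)" for c
    using dual by (auto simp: vec_eq_iff sum_component axis_def mult.commute)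
  have X_eq: "X a b = (\<Sum>k\<in>UNIV. \<Sum>l\<in>UNIV. A k $ a * A l $ b * bform X (U k) (U l))" for a b
    unfolding bform_axis[symmetric, of X a b] axis_eq bform_sum_left
    unfolding bform_sum_right
    by (simp only: sum_distrib_left mult.assoc)
  have swap: "(\<Sum>a\<in>UNIV. \<Sum>b\<in>UNIV. \<Sum>k\<in>UNIV. \<Sum>l\<in>UNIV. F a b k l) =
      (\<Sum>k\<in>UNIV. \<Sum>l\<in>UNIV. \<Sum>a\<in>UNIV. \<Sum>b\<in>UNIV. F a b k l)" for F :: "4 \<Rightarrow> 4 \<Rightarrow> 4 \<Rightarrow> 4 \<Rightarrow> real"
  proof -
    have "(\<Sum>a\<in>UNIV. \<Sum>b\<in>UNIV. \<Sum>k\<in>UNIV. \<Sum>l\<in>UNIV. F a b k l) =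
        (\<Sum>a\<in>UNIV. \<Sum>k\<in>UNIV. \<Sum>b\<in>UNIV. \<Sum>l\<in>UNIV. F a b k l)"
      by (rule sum.cong[OF refl], rule sum.swap)
    also have "\<dots> = (\<Sum>k\<in>UNIV. \<Sum>a\<in>UNIV. \<Sum>l\<in>UNIV. \<Sum>b\<in>UNIV. F a b k l)"
      by (subst sum.swap) (rule sum.cong[OF refl], rule sum.cong[OF refl], rule sum.swap)
    also have "\<dots> = (\<Sum>k\<in>UNIV. \<Sum>l\<in>UNIV. \<Sum>a\<in>UNIV. \<Sum>b\<in>UNIV. F a b k l)"
      by (rule sum.cong[OF refl], rule sum.swap)
    finally show ?thesis .
  qed
  have "(\<Sum>a\<in>UNIV. \<Sum>b\<in>UNIV. H a b * X a b) =
      (\<Sum>a\<in>UNIV. \<Sum>b\<in>UNIV. \<Sum>k\<in>UNIV. \<Sum>l\<in>UNIV. A k $ a * A l $ b * H a b * bform X (U k) (U l))"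
    by (simp add: X_eq sum_distrib_left ac_simps)
  also have "\<dots> = (\<Sum>k\<in>UNIV. \<Sum>l\<in>UNIV. \<Sum>a\<in>UNIV. \<Sum>b\<in>UNIV. A k $ a * A l $ b * H a b * bform X (U k) (U l))"
    by (rule swap)
  also have "\<dots> = (\<Sum>k\<in>UNIV. \<Sum>l\<in>UNIV. bform H (A k) (A l) * bform X (U k) (U l))"
    by (simp add: bform_def sum_distrib_right)
  finally show ?thesis .
qed

lemma orthonormal_rows_completeness:
  fixes Q :: "real^'n^'n"
  assumes "\<And>i j. Q $ i \<bullet> Q $ j = (if i = j then 1 else 0)"
  shows "(\<Sum>k\<in>UNIV. Q $ k $ a * Q $ k $ c) = (if a = c then 1 else 0)"
proof -
  have "Q ** transpose Q = mat 1"
    using assms by (simp add: vec_eq_iff matrix_matrix_mult_def transpose_def inner_vec_def mat_def)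
  then have "transpose Q ** Q = mat 1"
    using matrix_left_right_inverse by blast
  then have "(transpose Q ** Q) $ a $ c = mat 1 $ a $ c"
    by simp
  then show ?thesis
    by (simp add: matrix_matrix_mult_def transpose_def mat_def)
qed

definition null_frame :: "real^4 \<Rightarrow> real^4 \<Rightarrow> real^4 \<Rightarrow> 4 \<Rightarrow> real^4" where
  "null_frame p S1 S2 k = (if k = 0 then Lv p else if k = 1 then Lbv p else if k = 2 then S1 else S2)"

text \<open>Since \<open>m(L, L) = m(Lb, Lb) = 0\<close> and \<open>m(L, Lb) = -2\<close>, the \<open>m\<close>-dual of \<open>L\<close> is \<open>-Lb/2\<close>
  and that of \<open>Lb\<close> is \<open>-L/2\<close>.\<close>

definition dual_null_frame :: "real^4 \<Rightarrow> real^4 \<Rightarrow> real^4 \<Rightarrow> 4 \<Rightarrow> real^4" where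
  "dual_null_frame p S1 S2 k = mlow (if k = 0 then (-1/2) *\<^sub>R Lbv p
     else if k = 1 then (-1/2) *\<^sub>R Lv p else if k = 2 then S1 else S2)"

context
  fixes p S1 S2 :: "real^4"
  assumes r: "rad p > 0" and S1_0: "S1 $ 0 = 0" and S2_0: "S2 $ 0 = 0"
    and S1_norm: "norm S1 = 1" and S2_norm: "norm S2 = 1"
    and S1_S2: "S1 \<bullet> S2 = 0" and S1_omg: "S1 \<bullet> omg p = 0" and S2_omg: "S2 \<bullet> omg p = 0"
begin

lemma null_frame_dual:
  "(\<Sum>k\<in>UNIV. null_frame p S1 S2 k $ a * dual_null_frame p S1 S2 k $ c) = (if a = c then 1 else 0)"
proof -
  define Q :: "real^4^4" where "Q = (\<chi> k. if k = 0 then e0 else if k = 1 then omg p else if k = 2 then S1 else S2)"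
  have ip: "e0 \<bullet> e0 = 1" "e0 \<bullet> omg p = 0" "e0 \<bullet> S1 = 0" "e0 \<bullet> S2 = 0"
      "omg p \<bullet> omg p = 1" "S1 \<bullet> S1 = 1" "S2 \<bullet> S2 = 1"
    using S1_0 S2_0 S1_norm S2_norm inner_omg_self[OF r]
    by (simp_all add: e0_def inner_axis' omg_nth_0 dot_square_norm)
  have "Q $ i \<bullet> Q $ j = (if i = j then 1 else 0)" for i j
    using exhaust_4_from_zero[of i] exhaust_4_from_zero[of j] ip S1_S2 S1_omg S2_omg
    by (auto simp: Q_def inner_commute)
  from orthonormal_rows_completeness[OF this]
  have "e0 $ a * e0 $ c + omg p $ a * omg p $ c + S1 $ a * S1 $ c + S2 $ a * S2 $ c
      = (if a = c then 1 else 0)"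
    by (simp add: sum_4_from_zero Q_def)
  then show ?thesis
    using S1_0 S2_0 omg_nth_0[of p]
    by (cases "c = 0")
      (simp_all add: null_frame_def dual_null_frame_def sum_4_from_zero Lv_nth Lbv_nth mlow_nth
        e0_nth algebra_simps)
qed

lemma contraction_null_frame:
  assumes h_sym: "\<And>a b. h a b = h b a" and X_sym: "\<And>a b. X a b = X b a"
  shows "(\<Sum>a\<in>UNIV. \<Sum>b\<in>UNIV. h a b * X a b) =
     1/4 * Hlow h (Lbv p) (Lbv p) * bform X (Lv p) (Lv p)
   + 1/4 * Hlow h (Lv p) (Lv p) * bform X (Lbv p) (Lbv p)
   + 1/2 * Hlow h (Lv p) (Lbv p) * bform X (Lv p) (Lbv p)
   - Hlow h (Lbv p) S1 * bform X (Lv p) S1 - Hlow h (Lbv p) S2 * bform X (Lv p) S2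
   - Hlow h (Lv p) S1 * bform X (Lbv p) S1 - Hlow h (Lv p) S2 * bform X (Lbv p) S2
   + Hlow h S1 S1 * bform X S1 S1 + 2 * Hlow h S1 S2 * bform X S1 S2 + Hlow h S2 S2 * bform X S2 S2"
proof -
  have hs: "Hlow h u v = Hlow h v u" for u v
    using Hlow_sym h_sym by blast
  have xs: "bform X u v = bform X v u" for u v
    using bform_sym X_sym by blast
  have "(\<Sum>a\<in>UNIV. \<Sum>b\<in>UNIV. h a b * X a b) = (\<Sum>k\<in>UNIV. \<Sum>l\<in>UNIV.
      bform h (dual_null_frame p S1 S2 k) (dual_null_frame p S1 S2 l) *
      bform X (null_frame p S1 S2 k) (null_frame p S1 S2 l))"
    by (rule contraction_dual_frames[OF null_frame_dual])
  also have "\<dots> = 1/4 * Hlow h (Lbv p) (Lbv p) * bform X (Lv p) (Lv p)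
   + 1/4 * Hlow h (Lv p) (Lv p) * bform X (Lbv p) (Lbv p)
   + 1/2 * Hlow h (Lv p) (Lbv p) * bform X (Lv p) (Lbv p)
   - Hlow h (Lbv p) S1 * bform X (Lv p) S1 - Hlow h (Lbv p) S2 * bform X (Lv p) S2
   - Hlow h (Lv p) S1 * bform X (Lbv p) S1 - Hlow h (Lv p) S2 * bform X (Lbv p) S2
   + Hlow h S1 S1 * bform X S1 S1 + 2 * Hlow h S1 S2 * bform X S1 S2 + Hlow h S2 S2 * bform X S2 S2"
    using hs[of "Lbv p" "Lv p"] hs[of S1 "Lv p"] hs[of S2 "Lv p"]
      hs[of S1 "Lbv p"] hs[of S2 "Lbv p"] hs[of S2 S1]
      xs[of "Lbv p" "Lv p"] xs[of S1 "Lv p"] xs[of S2 "Lv p"]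
      xs[of S1 "Lbv p"] xs[of S2 "Lbv p"] xs[of S2 S1]
    by (simp add: null_frame_def dual_null_frame_def sum_4_from_zero Hlow_eq_bform[symmetric]
        Hlow_scaleR_left Hlow_scaleR_right Hlow_minus_left Hlow_minus_right algebra_simps)
  finally show ?thesis .
qed

end

section \<open>Frame derivatives of a \<open>C\<^sup>2\<close> function\<close>

definition hess :: "(real^4 \<Rightarrow> real) \<Rightarrow> real^4 \<Rightarrow> 4 \<Rightarrow> 4 \<Rightarrow> real" where
  "hess f p a b = pd (pd f b) a p"

lemma hess_sym: "C2 f \<Longrightarrow> hess f p a b = hess f p b a"
  unfolding hess_def by (rule pd_pd_commute)

lemma dirv_pd_eq_sum_hess: "C2 f \<Longrightarrow> dirv (pd f b) v p = (\<Sum>a\<in>UNIV. v $ a * hess f p a b)"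
  unfolding hess_def by (rule dirv_eq_sum_pd[OF C2_pd_differentiable])

lemma vf_qv_rad_mult:
  assumes "C2 \<phi>" "rad y > 0"
  shows "vf qv (\<lambda>y. rad y * \<phi> y) y = \<phi> y / 2 + rad y * vf qv \<phi> y"
proof -
  have "((\<lambda>h. rad (y + h *\<^sub>R qv y) * \<phi> (y + h *\<^sub>R qv y)) has_real_derivative
      (omg y \<bullet> spat (qv y)) * \<phi> y + dirv \<phi> (qv y) y * rad y) (at 0)"
    using DERIV_mult[OF rad_has_real_derivative[OF assms(2)]
        dirv_has_real_derivative_0[OF C2_differentiable[OF assms(1)]]] by simp
  then have "vf qv (\<lambda>y. rad y * \<phi> y) y = (omg y \<bullet> spat (qv y)) * \<phi> y + dirv \<phi> (qv y) y * rad y"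
    unfolding vf_def dirv_def by (rule DERIV_imp_deriv)
  moreover have "omg y \<bullet> spat (qv y) = 1/2"
    using inner_omg_self[OF assms(2)] by (simp add: spat_qv)
  ultimately show ?thesis
    by (simp add: vf_def mult.commute)
qed

lemma dirv_vf_qv_rad_mult:
  assumes C: "C2 \<phi>" and r: "rad p > 0"
  shows "dirv (vf qv (\<lambda>y. rad y * \<phi> y)) v p =
     dirv \<phi> v p / 2 + (omg p \<bullet> spat v) * vf qv \<phi> p
     + rad p * (\<Sum>b\<in>UNIV. omg_dirv v p b / 2 * pd \<phi> b p + qv p $ b * dirv (pd \<phi> b) v p)"
proof -
  let ?D = "\<Sum>b\<in>UNIV. omg_dirv v p b / 2 * pd \<phi> b p + qv p $ b * dirv (pd \<phi> b) v p"
  have "((\<lambda>h. \<phi> (p + h *\<^sub>R v) / 2 + rad (p + h *\<^sub>R v) *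
       (\<Sum>b\<in>UNIV. qv (p + h *\<^sub>R v) $ b * pd \<phi> b (p + h *\<^sub>R v)))
      has_real_derivative dirv \<phi> v p / 2 + ((omg p \<bullet> spat v) * vf qv \<phi> p + ?D * rad p)) (at 0)"
  proof -
    have "((\<lambda>h. \<Sum>b\<in>UNIV. qv (p + h *\<^sub>R v) $ b * pd \<phi> b (p + h *\<^sub>R v))
        has_real_derivative ?D) (at 0)"
      by (rule has_real_derivative_contraction[OF qv_has_real_derivative[OF r] C2_pd_differentiable[OF C]])
    from DERIV_add[OF
        DERIV_cdivide[OF dirv_has_real_derivative_0[OF C2_differentiable[OF C, of p], of v], of 2]
        DERIV_mult[OF rad_has_real_derivative[OF r, of v] this]]
    show ?thesis
      by (simp add: vf_eq_sum_pd[OF C])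
  qed
  moreover have "open {h::real. 0 < rad (p + h *\<^sub>R v)}"
    unfolding rad_def spat_add spat_scaleR
    by (intro open_Collect_less continuous_intros)
  ultimately have "((\<lambda>h. vf qv (\<lambda>y. rad y * \<phi> y) (p + h *\<^sub>R v)) has_real_derivative
      dirv \<phi> v p / 2 + ((omg p \<bullet> spat v) * vf qv \<phi> p + ?D * rad p)) (at 0)"
    by (rule has_field_derivative_transform_within_open)
      (use r vf_qv_rad_mult[OF C] vf_eq_sum_pd[OF C] in auto)
  then show ?thesis
    unfolding dirv_def[of "vf qv (\<lambda>y. rad y * \<phi> y)"] by (simp add: DERIV_imp_deriv algebra_simps)
qed

context
  fixes \<phi> :: "real^4 \<Rightarrow> real" and p :: "real^4"
  assumes C: "C2 \<phi>" and r: "rad p > 0"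
begin

lemma vf_sv_vf_qv_rad_mult:
  "vf sv (vf qv (\<lambda>y. rad y * \<phi> y)) p =
     vf sv \<phi> p / 2 + vf qv \<phi> p / 2 - rad p / 4 * bform (hess \<phi> p) (Lv p) (Lbv p)"
proof -
  have "vf sv (vf qv (\<lambda>y. rad y * \<phi> y)) p =
      vf sv \<phi> p / 2 + vf qv \<phi> p / 2 + rad p * bform (hess \<phi> p) (sv p) (qv p)"
    using omg_dirv_radial[OF r spat_sv] inner_omg_self[OF r]
    by (simp add: vf_def[of sv] dirv_vf_qv_rad_mult[OF C r] dirv_pd_eq_sum_hess[OF C]
        spat_sv sum_mult_sum_eq_bform)
  then show ?thesis
    by (simp add: sv_eq_Lv qv_eq_Lbv bform_scaleR_left bform_scaleR_right bform_minus_left bform_minus_right)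
qed

lemma vf_qv_vf_qv_rad_mult:
  "vf qv (vf qv (\<lambda>y. rad y * \<phi> y)) p = vf qv \<phi> p + rad p / 4 * bform (hess \<phi> p) (Lbv p) (Lbv p)"
proof -
  have "vf qv (vf qv (\<lambda>y. rad y * \<phi> y)) p = vf qv \<phi> p + rad p * bform (hess \<phi> p) (qv p) (qv p)"
    using omg_dirv_radial[OF r spat_qv] inner_omg_self[OF r]
    by (simp add: vf_def[of qv] dirv_vf_qv_rad_mult[OF C r] dirv_pd_eq_sum_hess[OF C]
        spat_qv sum_mult_sum_eq_bform)
  then show ?thesis
    by (simp add: qv_eq_Lbv bform_scaleR_left bform_scaleR_right bform_minus_left bform_minus_right)
qed

lemma dirv_omg_eq_vf_sv_add_vf_qv: "dirv \<phi> (omg p) p = vf sv \<phi> p + vf qv \<phi> p"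
proof -
  have "omg p = sv p + qv p"
    by (simp add: vec_eq_iff sv_def qv_def field_simps)
  then show ?thesis
    by (simp add: vf_def dirv_eq_sum_pd[OF C2_differentiable[OF C]] sum.distrib distrib_right)
qed

lemma vf_barv_vf_barv:
  "vf (barv i) (vf (barv j) \<phi>) p =
     (\<Sum>b\<in>UNIV. barv_dirv j (barv i p) p b * pd \<phi> b p) + bform (hess \<phi> p) (barv i p) (barv j p)"
proof -
  have "vf (barv j) \<phi> = (\<lambda>y. \<Sum>b\<in>UNIV. barv j y $ b * pd \<phi> b y)"
    using vf_eq_sum_pd[OF C] by (simp add: fun_eq_iff)
  then have "vf (barv i) (vf (barv j) \<phi>) p =
      deriv (\<lambda>h. \<Sum>b\<in>UNIV. barv j (p + h *\<^sub>R barv i p) $ b * pd \<phi> b (p + h *\<^sub>R barv i p)) 0"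
    by (simp add: vf_def[of "barv i"] dirv_def)
  also have "\<dots> = (\<Sum>b\<in>UNIV. barv_dirv j (barv i p) p b * pd \<phi> b p
      + barv j p $ b * dirv (pd \<phi> b) (barv i p) p)"
    by (rule DERIV_imp_deriv, rule has_real_derivative_contraction[OF barv_has_real_derivative[OF r]
        C2_pd_differentiable[OF C]])
  finally show ?thesis
    by (simp add: dirv_pd_eq_sum_hess[OF C] sum.distrib sum_mult_sum_eq_bform)
qed

lemma vf_barv0_vf_barv0: "vf (barv 0) (vf (barv 0) \<phi>) p = bform (hess \<phi> p) (Lv p) (Lv p)"
  by (simp add: vf_barv_vf_barv barv_dirv_def barv_0 omg_dirv_radial[OF r spat_Lv])

lemma vf_barv_vf_barv0:
  "i \<noteq> 0 \<Longrightarrow> vf (barv i) (vf (barv 0) \<phi>) p =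
     vf (barv i) \<phi> p / rad p + bform (hess \<phi> p) (barv i p) (Lv p)"
  by (simp add: vf_barv_vf_barv barv_dirv_def omg_dirv_barv[OF r] barv_0 vf_eq_sum_pd[OF C]
      sum_divide_distrib)

lemma vf_barv_vf_barv_spatial:
  "i \<noteq> 0 \<Longrightarrow> j \<noteq> 0 \<Longrightarrow> vf (barv i) (vf (barv j) \<phi>) p = bform (hess \<phi> p) (barv i p) (barv j p)
     - (barv i p $ j * dirv \<phi> (omg p) p + omg p $ j * vf (barv i) \<phi> p) / rad p"
  by (simp add: vf_barv_vf_barv barv_dirv_def omg_dirv_barv[OF r] vf_eq_sum_pd[OF C]
      dirv_eq_sum_pd[OF C2_differentiable[OF C]] sum_distrib_left sum_divide_distrib
      sum.distrib algebra_simps add_divide_distrib sum_negf sum_subtractf)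

lemma lapw_eq_hess:
  "lapw \<phi> p = hess \<phi> p 1 1 + hess \<phi> p 2 2 + hess \<phi> p 3 3 - bform (hess \<phi> p) (omg p) (omg p)
     - 2 * dirv \<phi> (omg p) p / rad p"
proof -
  let ?X = "hess \<phi> p" and ?w = "omg p"
  have X_sym: "bform ?X u v = bform ?X v u" for u v
    using bform_sym hess_sym[OF C] by blast
  have w2: "(\<Sum>i\<in>UNIV - {0}. ?w $ i * ?w $ i) = 1"
    using sum_spatial_mult_nth[OF omg_nth_0] inner_omg_self[OF r] by simp
  have "bform ?X (barv i p) (barv i p)
      = ?X i i - 2 * (?w $ i * bform ?X (axis i 1) ?w) + ?w $ i * ?w $ i * bform ?X ?w ?w"
    if "i \<noteq> 0" for i
    using that X_sym[of ?w "axis i 1"]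
    by (simp add: barv_spatial bform_diff_left bform_diff_right bform_scaleR_left
        bform_scaleR_right bform_axis algebra_simps)
  then have "(\<Sum>i\<in>UNIV - {0}. bform ?X (barv i p) (barv i p))
      = (\<Sum>i\<in>UNIV - {0}. ?X i i) - 2 * bform ?X (\<Sum>i\<in>UNIV - {0}. ?w $ i *\<^sub>R axis i 1) ?w
        + (\<Sum>i\<in>UNIV - {0}. ?w $ i * ?w $ i) * bform ?X ?w ?w"
    by (simp add: bform_sum_left sum_subtractf sum.distrib sum_distrib_left sum_distrib_right)
  also have "\<dots> = ?X 1 1 + ?X 2 2 + ?X 3 3 - bform ?X ?w ?w"
    unfolding w2 omg_eq_sum_axis[symmetric] by (simp add: sum_spatial_4)
  finally have hess_part: "(\<Sum>i\<in>UNIV - {0}. bform ?X (barv i p) (barv i p))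
      = ?X 1 1 + ?X 2 2 + ?X 3 3 - bform ?X ?w ?w" .
  have trace_part: "(\<Sum>i\<in>UNIV - {0}. barv i p $ i) = 2"
    using w2 by (simp add: barv_nth axis_def sum_spatial_4)
  have "(\<Sum>i\<in>UNIV - {0}. ?w $ i * vf (barv i) \<phi> p) = dirv \<phi> (\<Sum>i\<in>UNIV - {0}. ?w $ i *\<^sub>R barv i p) p"
    by (simp add: vf_def linear_sum[OF linear_dirv[OF C2_differentiable[OF C]]]
        linear_scale[OF linear_dirv[OF C2_differentiable[OF C]]])
  also have "\<dots> = 0"
    using sum_barv_spatial[OF omg_nth_0] inner_omg_self[OF r] by (simp add: dirv_zero)
  finally have radial_part: "(\<Sum>i\<in>UNIV - {0}. ?w $ i * vf (barv i) \<phi> p) = 0" .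
  have "lapw \<phi> p = (\<Sum>i\<in>UNIV - {0}. bform ?X (barv i p) (barv i p))
      - ((\<Sum>i\<in>UNIV - {0}. barv i p $ i) * dirv \<phi> (omg p) p
        + (\<Sum>i\<in>UNIV - {0}. ?w $ i * vf (barv i) \<phi> p)) / rad p"
    by (simp add: lapw_def vf_barv_vf_barv_spatial sum_subtractf sum.distrib sum_divide_distrib add_divide_distrib
        sum_distrib_right)
  then show ?thesis
    unfolding hess_part trace_part radial_part by simp
qed

lemma boxg_eq_lapw:
  "boxg H \<phi> p = lapw \<phi> p + 2 * dirv \<phi> (omg p) p / rad p - bform (hess \<phi> p) (Lv p) (Lbv p)
     + (\<Sum>a\<in>UNIV. \<Sum>b\<in>UNIV. H p a b * hess \<phi> p a b)"
proof -
  let ?X = "hess \<phi> p"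
  have "boxg H \<phi> p = (\<Sum>a\<in>UNIV. \<Sum>b\<in>UNIV. mink a b * ?X a b)
      + (\<Sum>a\<in>UNIV. \<Sum>b\<in>UNIV. H p a b * ?X a b)"
    by (simp add: boxg_def hess_def distrib_right sum.distrib)
  moreover have "(\<Sum>a\<in>UNIV. \<Sum>b\<in>UNIV. mink a b * ?X a b) = - ?X 0 0 + ?X 1 1 + ?X 2 2 + ?X 3 3"
    by (simp add: sum_4_from_zero mink_def)
  moreover have "bform ?X (Lv p) (Lbv p) = ?X 0 0 - bform ?X (omg p) (omg p)"
    using bform_sym[of ?X "axis 0 1" "omg p"] hess_sym[OF C]
    by (simp add: Lv_def Lbv_def e0_def bform_add_left bform_diff_left bform_add_right
        bform_diff_right bform_axis)
  ultimately show ?thesis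
    using r by (simp add: lapw_eq_hess)
qed

lemma rad_mult_bform_hess_Lv_tangent:
  assumes "S $ 0 = 0" "S \<bullet> omg p = 0"
  shows "rad p * bform (hess \<phi> p) (Lv p) S =
    (\<Sum>i\<in>UNIV - {0}. S $ i * (rad p * vf (barv i) (vf (barv 0) \<phi>) p - vf (barv i) \<phi> p))"
proof -
  have "bform (hess \<phi> p) (Lv p) S = bform (hess \<phi> p) S (Lv p)"
    by (rule bform_sym) (rule hess_sym[OF C])
  then have "rad p * bform (hess \<phi> p) (Lv p) S =
      (\<Sum>i\<in>UNIV - {0}. S $ i * (rad p * bform (hess \<phi> p) (barv i p) (Lv p)))"
    by (simp add: bform_tangent_left[OF assms] sum_distrib_left mult.left_commute)
  also have "\<dots> = (\<Sum>i\<in>UNIV - {0}. S $ i * (rad p * vf (barv i) (vf (barv 0) \<phi>) p - vf (barv i) \<phi> p))"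
    using r by (intro sum.cong refl) (simp add: vf_barv_vf_barv0 algebra_simps)
  finally show ?thesis .
qed

lemma bform_hess_Lbv_tangent:
  assumes "S $ 0 = 0" "S \<bullet> omg p = 0"
  shows "bform (hess \<phi> p) (Lbv p) S =
    (\<Sum>i\<in>UNIV - {0}. S $ i * (\<Sum>b\<in>UNIV. Lbv p $ b * vf (barv i) (pd \<phi> b) p))"
proof -
  have "bform (hess \<phi> p) (Lbv p) S = bform (hess \<phi> p) S (Lbv p)"
    by (rule bform_sym) (rule hess_sym[OF C])
  then show ?thesis
    by (simp add: bform_tangent_left[OF assms] vf_def dirv_pd_eq_sum_hess[OF C]
        sum_mult_sum_eq_bform)
qed

lemma rad_mult_bform_hess_tangent_tangent:
  assumes S: "S $ 0 = 0" "S \<bullet> omg p = 0" and T: "T $ 0 = 0" "T \<bullet> omg p = 0"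
  shows "rad p * bform (hess \<phi> p) S T - (S \<bullet> T) * dirv \<phi> (omg p) p =
    rad p * (\<Sum>i\<in>UNIV - {0}. S $ i * (\<Sum>j\<in>UNIV - {0}. T $ j * vf (barv i) (vf (barv j) \<phi>) p))"
proof -
  let ?X = "hess \<phi> p" and ?Dr = "dirv \<phi> (omg p) p"
  have T_omg: "omg p \<bullet> T = 0"
    using T(2) by (simp add: inner_commute)
  have "(\<Sum>j\<in>UNIV - {0}. T $ j * vf (barv i) (vf (barv j) \<phi>) p)
      = bform ?X (barv i p) T - (barv i p \<bullet> T) * ?Dr / rad p" if "i \<noteq> 0" for i
  proof -
    have "(\<Sum>j\<in>UNIV - {0}. T $ j * vf (barv i) (vf (barv j) \<phi>) p)
        = (\<Sum>j\<in>UNIV - {0}. T $ j * bform ?X (barv i p) (barv j p)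
          - ((T $ j * barv i p $ j) * ?Dr + (T $ j * omg p $ j) * vf (barv i) \<phi> p) / rad p)"
      using that by (intro sum.cong refl) (simp add: vf_barv_vf_barv_spatial algebra_simps)
    also have "\<dots> = (\<Sum>j\<in>UNIV - {0}. T $ j * bform ?X (barv i p) (barv j p))
          - ((\<Sum>j\<in>UNIV - {0}. T $ j * barv i p $ j) * ?Dr
            + (\<Sum>j\<in>UNIV - {0}. T $ j * omg p $ j) * vf (barv i) \<phi> p) / rad p"
      by (simp add: sum_subtractf sum_distrib_right sum_divide_distrib add_divide_distrib sum.distrib)
    finally show ?thesis
      by (simp add: bform_tangent_right[OF T] sum_spatial_mult_nth[OF T(1)] T_omg)
  qed
  then have "(\<Sum>i\<in>UNIV - {0}. S $ i * (\<Sum>j\<in>UNIV - {0}. T $ j * vf (barv i) (vf (barv j) \<phi>) p))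
      = (\<Sum>i\<in>UNIV - {0}. S $ i * bform ?X (barv i p) T - S $ i * (barv i p \<bullet> T) * ?Dr / rad p)"
    by (intro sum.cong refl) (simp add: right_diff_distrib)
  also have "\<dots> = bform ?X S T - (S \<bullet> T) * ?Dr / rad p"
    by (simp add: bform_tangent_left[OF S] inner_tangent_left[OF S] sum_subtractf
        sum_distrib_right sum_divide_distrib)
  finally show ?thesis
    using r by (simp add: right_diff_distrib)
qed

end

section \<open>Estimates\<close>

lemma abs_vf_barv_vf_barv_le: "\<bar>vf (barv a) (vf (barv b) \<phi>) p\<bar> \<le> bar2_norm \<phi> p"
proof -
  let ?Y = "\<lambda>a b. vf (barv a) (vf (barv b) \<phi>) p"
  have "(?Y a b)\<^sup>2 \<le> (\<Sum>b'\<in>UNIV. (?Y a b')\<^sup>2)"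
    by (rule member_le_sum) auto
  also have "\<dots> \<le> (\<Sum>a'\<in>UNIV. \<Sum>b'\<in>UNIV. (?Y a' b')\<^sup>2)"
    by (rule member_le_sum[where f = "\<lambda>a'. \<Sum>b'\<in>UNIV. (?Y a' b')\<^sup>2"]) (auto intro: sum_nonneg)
  finally show ?thesis
    unfolding bar2_norm_def using real_sqrt_le_mono by fastforce
qed

lemma abs_vf_barv_le: "\<bar>vf (barv a) \<phi> p\<bar> \<le> bard_abs \<phi> p"
  unfolding bard_abs_def by (rule member_le_sum[where f = "\<lambda>a. \<bar>vf (barv a) \<phi> p\<bar>"]) auto

lemma abs_vf_barv_pd_le: "\<bar>vf (barv a) (pd \<phi> b) p\<bar> \<le> bardd_abs \<phi> p"
proof -
  have "\<bar>vf (barv a) (pd \<phi> b) p\<bar> \<le> (\<Sum>b'\<in>UNIV. \<bar>vf (barv a) (pd \<phi> b') p\<bar>)"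
    by (rule member_le_sum[where f = "\<lambda>b'. \<bar>vf (barv a) (pd \<phi> b') p\<bar>"]) auto
  also have "\<dots> \<le> bardd_abs \<phi> p"
    unfolding bardd_abs_def
    by (rule member_le_sum[where f = "\<lambda>a. \<Sum>b'\<in>UNIV. \<bar>vf (barv a) (pd \<phi> b') p\<bar>"])
      (auto intro: sum_nonneg)
  finally show ?thesis .
qed

context
  fixes \<phi> :: "real^4 \<Rightarrow> real" and p :: "real^4"
  assumes C: "C2 \<phi>" and r: "rad p > 0"
begin

lemma abs_vf_qv_le_dabs: "\<bar>vf qv \<phi> p\<bar> \<le> dabs \<phi> p"
proof -
  have "\<bar>qv p $ b * pd \<phi> b p\<bar> \<le> \<bar>pd \<phi> b p\<bar>" for b
    using abs_qv_nth_le[OF r, of b] by (simp add: abs_mult mult_left_le_one_le)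
  then show ?thesis
    unfolding vf_eq_sum_pd[OF C] dabs_def by (intro order_trans[OF sum_abs sum_mono])
qed

lemma abs_vf_sv_le_bard_abs: "\<bar>vf sv \<phi> p\<bar> \<le> bard_abs \<phi> p / 2"
  using abs_vf_barv_le[of 0 \<phi> p]
  by (simp add: vf_def sv_eq_Lv barv_0 linear_scale[OF linear_dirv[OF C2_differentiable[OF C]]])

lemma abs_bform_hess_Lv_Lv_le: "\<bar>bform (hess \<phi> p) (Lv p) (Lv p)\<bar> \<le> bar2_norm \<phi> p"
  using abs_vf_barv_vf_barv_le[of 0 0 \<phi> p] by (simp add: vf_barv0_vf_barv0[OF C r])

context
  fixes S :: "real^4"
  assumes S_0: "S $ 0 = 0" and S_omg: "S \<bullet> omg p = 0" and S_norm: "norm S = 1"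
begin

lemma abs_rad_mult_bform_hess_Lv_tangent_le:
  "\<bar>rad p * bform (hess \<phi> p) (Lv p) S\<bar> \<le> 3 * (rad p * bar2_norm \<phi> p + bard_abs \<phi> p)"
proof -
  have "\<bar>rad p * vf (barv i) (vf (barv 0) \<phi>) p - vf (barv i) \<phi> p\<bar> \<le> rad p * bar2_norm \<phi> p + bard_abs \<phi> p"
    for i
    using r abs_vf_barv_vf_barv_le[of i 0 \<phi> p] abs_vf_barv_le[of i \<phi> p]
    by (auto simp: abs_mult intro!: order_trans[OF abs_triangle_ineq4] add_mono mult_left_mono)
  then have "\<bar>S $ i * (rad p * vf (barv i) (vf (barv 0) \<phi>) p - vf (barv i) \<phi> p)\<bar>
      \<le> rad p * bar2_norm \<phi> p + bard_abs \<phi> p" for i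
    using abs_mult_le[OF abs_nth_le_1[OF S_norm]] by fastforce
  then show ?thesis
    unfolding rad_mult_bform_hess_Lv_tangent[OF C r S_0 S_omg] by (rule abs_sum_spatial_le)
qed

lemma abs_bform_hess_Lbv_tangent_le: "\<bar>bform (hess \<phi> p) (Lbv p) S\<bar> \<le> 12 * bardd_abs \<phi> p"
proof -
  have "\<bar>\<Sum>b\<in>UNIV. Lbv p $ b * vf (barv i) (pd \<phi> b) p\<bar> \<le> 4 * bardd_abs \<phi> p" for i
    using abs_mult_le[OF abs_Lbv_nth_le[OF r] abs_vf_barv_pd_le] by (intro abs_sum_4_le) simp
  then have "\<bar>S $ i * (\<Sum>b\<in>UNIV. Lbv p $ b * vf (barv i) (pd \<phi> b) p)\<bar> \<le> 4 * bardd_abs \<phi> p" for i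
    using abs_mult_le[OF abs_nth_le_1[OF S_norm]] by fastforce
  then have "\<bar>\<Sum>i\<in>UNIV - {0}. S $ i * (\<Sum>b\<in>UNIV. Lbv p $ b * vf (barv i) (pd \<phi> b) p)\<bar>
      \<le> 3 * (4 * bardd_abs \<phi> p)"
    by (rule abs_sum_spatial_le)
  then show ?thesis
    unfolding bform_hess_Lbv_tangent[OF C r S_0 S_omg] by simp
qed

lemma abs_rad_mult_bform_hess_tangent_tangent_le:
  assumes T_0: "T $ 0 = 0" and T_omg: "T \<bullet> omg p = 0" and T_norm: "norm T = 1"
  shows "\<bar>rad p * bform (hess \<phi> p) S T - (S \<bullet> T) * dirv \<phi> (omg p) p\<bar> \<le> 9 * (rad p * bar2_norm \<phi> p)"
proof -
  have "\<bar>\<Sum>j\<in>UNIV - {0}. T $ j * vf (barv i) (vf (barv j) \<phi>) p\<bar> \<le> 3 * bar2_norm \<phi> p" for i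
    using abs_mult_le[OF abs_nth_le_1[OF T_norm] abs_vf_barv_vf_barv_le] by (intro abs_sum_spatial_le) simp
  then have "\<bar>S $ i * (\<Sum>j\<in>UNIV - {0}. T $ j * vf (barv i) (vf (barv j) \<phi>) p)\<bar> \<le> 3 * bar2_norm \<phi> p" for i
    using abs_mult_le[OF abs_nth_le_1[OF S_norm]] by fastforce
  then have "\<bar>\<Sum>i\<in>UNIV - {0}. S $ i * (\<Sum>j\<in>UNIV - {0}. T $ j * vf (barv i) (vf (barv j) \<phi>) p)\<bar>
      \<le> 3 * (3 * bar2_norm \<phi> p)"
    by (rule abs_sum_spatial_le)
  then show ?thesis
    unfolding rad_mult_bform_hess_tangent_tangent[OF C r S_0 S_omg T_0 T_omg]
    using r by (simp add: abs_mult)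
qed

end

end

text \<open>In the next three lemmas the real variables are the frame components at the point:
  \<open>XLbS1\<close> is \<open>X(Lb, S1)\<close> for the Hessian \<open>X\<close>, \<open>HLS1\<close> is \<open>H\<^sub>L\<^sub>S\<^sub>1\<close>, \<open>Ds, Dq, Dr\<close> are the
  derivatives of \<open>\<phi>\<close> along \<open>\<partial>\<^sub>s, \<partial>\<^sub>q, \<partial>\<^sub>r\<close>, \<open>psi, vfs, vfq\<close> are \<open>\<psi>, \<partial>\<^sub>s\<psi>, \<partial>\<^sub>q\<psi>\<close>,
  \<open>Fp\<close> is the source term, \<open>lap\<close> is \<open>\<Delta>\<^sub>\<omega>\<phi>\<close>, and \<open>ha, hl, b2, bd, bdd, da\<close> bound
  \<open>|H|, |H|\<^sub>L\<^sub>T\<close> and the derivative norms of \<open>\<phi>\<close>.\<close>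

lemma null_frame_error_identity:
  fixes r g f0 Ds Dq Dr lap XLL XLLb XLbLb XLS1 XLS2 XLbS1 XLbS2 X11 X12 X22
    HLL HLLb HLbLb HLS1 HLS2 HLbS1 HLbS2 H11 H12 H22 psi vfs vfq Fp :: real
  assumes r: "r > 0" and g: "g = -1/2 + HLLb/4" and g_ne: "g \<noteq> 0"
    and psi: "psi = f0/2 + r * Dq" and vfs: "vfs = Ds/2 + Dq/2 - r/4 * XLLb"
    and vfq: "vfq = Dq + r/4 * XLbLb" and Dr: "Dr = Ds + Dq"
    and Fp: "Fp = lap + 2 * Dr / r - XLLb + (1/4 * HLbLb * XLL + 1/4 * HLL * XLbLb + 1/2 * HLLb * XLLb
       - HLbS1 * XLS1 - HLbS2 * XLS2 - HLS1 * XLbS1 - HLS2 * XLbS2 + H11 * X11 + 2 * H12 * X12 + H22 * X22)"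
  shows "2 * g * (4 * vfs - HLL / (2 * g) * vfq - (H11 + H22 + HLLb) / (2 * g * r) * psi + r * Fp / (2 * g)) =
    r * lap + (HLLb + H11 + H22) * Ds - HLL * Dq - (H11 + H22 + HLLb) * (f0 / (2 * r))
    + r * HLbLb / 4 * XLL - HLbS1 * (r * XLS1) - HLbS2 * (r * XLS2) - r * (HLS1 * XLbS1) - r * (HLS2 * XLbS2)
    + H11 * (r * X11 - Dr) + 2 * H12 * (r * X12) + H22 * (r * X22 - Dr)"
proof -
  have "2 * g * (4 * vfs - HLL / (2 * g) * vfq - (H11 + H22 + HLLb) / (2 * g * r) * psi + r * Fp / (2 * g))
      = 8 * g * vfs - HLL * vfq - (H11 + H22 + HLLb) * psi / r + r * Fp"
    using g_ne r by (simp add: field_simps)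
  also have "\<dots> = 8 * g * vfs - HLL * vfq - (H11 + H22 + HLLb) * (f0 / (2 * r)) - (H11 + H22 + HLLb) * Dq
      + r * (Fp - 2 * Dr / r) + 2 * Dr"
    using r by (simp add: psi field_simps)
  finally show ?thesis
    using r unfolding Fp vfs vfq Dr g by (simp add: algebra_simps)
qed

lemma null_frame_error_terms_le:
  fixes r f0 Ds Dq Dr lap XLL XLS1 XLS2 XLbS1 XLbS2 X11 X12 X22
    HLL HLLb HLbLb HLS1 HLS2 HLbS1 HLbS2 H11 H12 H22 ha hl b2 bd bdd da :: real
  assumes r: "r > 0"
    and HLLb: "\<bar>HLLb\<bar> \<le> ha" and HLbLb: "\<bar>HLbLb\<bar> \<le> ha" and HLbS1: "\<bar>HLbS1\<bar> \<le> ha"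
    and HLbS2: "\<bar>HLbS2\<bar> \<le> ha" and H11: "\<bar>H11\<bar> \<le> ha" and H12: "\<bar>H12\<bar> \<le> ha" and H22: "\<bar>H22\<bar> \<le> ha"
    and HLL: "\<bar>HLL\<bar> \<le> hl" and HLS1: "\<bar>HLS1\<bar> \<le> hl" and HLS2: "\<bar>HLS2\<bar> \<le> hl"
    and Ds: "\<bar>Ds\<bar> \<le> bd / 2" and Dq: "\<bar>Dq\<bar> \<le> da" and XLL: "\<bar>XLL\<bar> \<le> b2"
    and XLS1: "\<bar>r * XLS1\<bar> \<le> 3 * (r * b2 + bd)" and XLS2: "\<bar>r * XLS2\<bar> \<le> 3 * (r * b2 + bd)"
    and XLbS1: "\<bar>XLbS1\<bar> \<le> 12 * bdd" and XLbS2: "\<bar>XLbS2\<bar> \<le> 12 * bdd"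
    and X11: "\<bar>r * X11 - Dr\<bar> \<le> 9 * (r * b2)" and X12: "\<bar>r * X12\<bar> \<le> 9 * (r * b2)"
    and X22: "\<bar>r * X22 - Dr\<bar> \<le> 9 * (r * b2)"
  shows "\<bar>r * lap + (HLLb + H11 + H22) * Ds - HLL * Dq - (H11 + H22 + HLLb) * (f0 / (2 * r))
    + r * HLbLb / 4 * XLL - HLbS1 * (r * XLS1) - HLbS2 * (r * XLS2) - r * (HLS1 * XLbS1) - r * (HLS2 * XLbS2)
    + H11 * (r * X11 - Dr) + 2 * H12 * (r * X12) + H22 * (r * X22 - Dr)\<bar>
     \<le> 50 * (r * \<bar>lap\<bar> + hl * (r * bdd + da) + ha * (r * b2 + bd + \<bar>f0\<bar> / r))"
    (is "\<bar>?T\<bar> \<le> _")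
proof -
  have H3: "\<bar>HLLb + H11 + H22\<bar> \<le> 3 * ha" "\<bar>H11 + H22 + HLLb\<bar> \<le> 3 * ha"
    using HLLb H11 H22 by linarith+
  have f0: "\<bar>f0 / (2 * r)\<bar> \<le> (\<bar>f0\<bar> / r) / 2"
    using r by simp
  have t0: "\<bar>r * lap\<bar> \<le> r * \<bar>lap\<bar>"
    using r by (simp add: abs_mult)
  note t1 = abs_mult_le[OF H3(1) Ds] and t3 = abs_mult_le[OF H3(2) f0]
  have t4: "\<bar>r * HLbLb / 4 * XLL\<bar> \<le> r * (ha * b2) / 4"
    using abs_mult_le[OF HLbLb XLL] r by (simp add: abs_mult)
  note t2 = abs_mult_le[OF HLL Dq] and t5 = abs_mult_le[OF HLbS1 XLS1]
    and t6 = abs_mult_le[OF HLbS2 XLS2] and t9 = abs_mult_le[OF H11 X11]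
    and t11 = abs_mult_le[OF H22 X22]
  have t7: "\<bar>r * (HLS1 * XLbS1)\<bar> \<le> r * (hl * (12 * bdd))"
    and t8: "\<bar>r * (HLS2 * XLbS2)\<bar> \<le> r * (hl * (12 * bdd))"
    using abs_mult_le[OF HLS1 XLbS1] abs_mult_le[OF HLS2 XLbS2] r
    by (simp_all only: abs_mult abs_of_pos mult_left_mono less_imp_le)
  have t10: "\<bar>2 * H12 * (r * X12)\<bar> \<le> 2 * (ha * (9 * (r * b2)))"
    using abs_mult_le[OF H12 X12] by (simp only: abs_mult mult.assoc)
  have "\<bar>?T\<bar> \<le> r * \<bar>lap\<bar> + 3 * ha * (bd / 2) + hl * da + 3 * ha * ((\<bar>f0\<bar> / r) / 2)
      + r * (ha * b2) / 4 + ha * (3 * (r * b2 + bd)) + ha * (3 * (r * b2 + bd))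
      + r * (hl * (12 * bdd)) + r * (hl * (12 * bdd))
      + ha * (9 * (r * b2)) + 2 * (ha * (9 * (r * b2))) + ha * (9 * (r * b2))"
    using t0 t1 t2 t3 t4 t5 t6 t7 t8 t9 t10 t11
    by (simp only: abs_le_iff) linarith
  also have "\<dots> \<le> 50 * (r * \<bar>lap\<bar> + hl * (r * bdd + da) + ha * (r * b2 + bd + \<bar>f0\<bar> / r))"
  proof -
    have "0 \<le> ha" "0 \<le> hl" "0 \<le> b2" "0 \<le> bd" "0 \<le> bdd" "0 \<le> da"
      using HLLb HLL XLL Ds XLbS1 Dq by linarith+
    then have "0 \<le> r * \<bar>lap\<bar>" "0 \<le> hl * (r * bdd)" "0 \<le> hl * da" "0 \<le> ha * (r * b2)"
      "0 \<le> ha * bd" "0 \<le> ha * (\<bar>f0\<bar> / r)"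
      using r by simp_all
    moreover have "50 * (r * \<bar>lap\<bar> + hl * (r * bdd + da) + ha * (r * b2 + bd + \<bar>f0\<bar> / r))
      - (r * \<bar>lap\<bar> + 3 * ha * (bd / 2) + hl * da + 3 * ha * ((\<bar>f0\<bar> / r) / 2)
      + r * (ha * b2) / 4 + ha * (3 * (r * b2 + bd)) + ha * (3 * (r * b2 + bd))
      + r * (hl * (12 * bdd)) + r * (hl * (12 * bdd))
      + ha * (9 * (r * b2)) + 2 * (ha * (9 * (r * b2))) + ha * (9 * (r * b2)))
      = 49 * (r * \<bar>lap\<bar>) + 26 * (hl * (r * bdd)) + 49 * (hl * da) + 31/4 * (ha * (r * b2))
        + 85/2 * (ha * bd) + 97/2 * (ha * (\<bar>f0\<bar> / r))"
      by (simp add: algebra_simps)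
    ultimately show ?thesis
      by linarith
  qed
  finally show ?thesis .
qed

lemma null_frame_error_estimate:
  fixes r g f0 Ds Dq Dr lap XLL XLLb XLbLb XLS1 XLS2 XLbS1 XLbS2 X11 X12 X22
    HLL HLLb HLbLb HLS1 HLS2 HLbS1 HLbS2 H11 H12 H22 psi vfs vfq Fp ha hl b2 bd bdd da :: real
  assumes r: "r > 0" and g: "g = -1/2 + HLLb/4" and g_neg: "g < -1/4"
    and psi: "psi = f0/2 + r * Dq" and vfs: "vfs = Ds/2 + Dq/2 - r/4 * XLLb"
    and vfq: "vfq = Dq + r/4 * XLbLb" and Dr: "Dr = Ds + Dq"
    and Fp: "Fp = lap + 2 * Dr / r - XLLb + (1/4 * HLbLb * XLL + 1/4 * HLL * XLbLb + 1/2 * HLLb * XLLb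
       - HLbS1 * XLS1 - HLbS2 * XLS2 - HLS1 * XLbS1 - HLS2 * XLbS2 + H11 * X11 + 2 * H12 * X12 + H22 * X22)"
    and HLLb: "\<bar>HLLb\<bar> \<le> ha" and HLbLb: "\<bar>HLbLb\<bar> \<le> ha" and HLbS1: "\<bar>HLbS1\<bar> \<le> ha"
    and HLbS2: "\<bar>HLbS2\<bar> \<le> ha" and H11: "\<bar>H11\<bar> \<le> ha" and H12: "\<bar>H12\<bar> \<le> ha" and H22: "\<bar>H22\<bar> \<le> ha"
    and HLL: "\<bar>HLL\<bar> \<le> hl" and HLS1: "\<bar>HLS1\<bar> \<le> hl" and HLS2: "\<bar>HLS2\<bar> \<le> hl"
    and Ds: "\<bar>Ds\<bar> \<le> bd / 2" and Dq: "\<bar>Dq\<bar> \<le> da" and XLL: "\<bar>XLL\<bar> \<le> b2"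
    and XLS1: "\<bar>r * XLS1\<bar> \<le> 3 * (r * b2 + bd)" and XLS2: "\<bar>r * XLS2\<bar> \<le> 3 * (r * b2 + bd)"
    and XLbS1: "\<bar>XLbS1\<bar> \<le> 12 * bdd" and XLbS2: "\<bar>XLbS2\<bar> \<le> 12 * bdd"
    and X11: "\<bar>r * X11 - Dr\<bar> \<le> 9 * (r * b2)" and X12: "\<bar>r * X12\<bar> \<le> 9 * (r * b2)"
    and X22: "\<bar>r * X22 - Dr\<bar> \<le> 9 * (r * b2)"
  shows "\<bar>4 * vfs - HLL / (2 * g) * vfq - (H11 + H22 + HLLb) / (2 * g * r) * psi + r * Fp / (2 * g)\<bar>
     \<le> 100 * (r * \<bar>lap\<bar> + hl * (r * bdd + da) + ha * (r * b2 + bd + \<bar>f0\<bar> / r))"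
    (is "\<bar>?E\<bar> \<le> 100 * ?Q")
proof -
  have "g \<noteq> 0"
    using g_neg by simp
  have "\<bar>2 * g * ?E\<bar> \<le> 50 * ?Q"
    unfolding null_frame_error_identity[OF r g \<open>g \<noteq> 0\<close> psi vfs vfq Dr Fp]
    by (rule null_frame_error_terms_le[OF r HLLb HLbLb HLbS1 HLbS2 H11 H12 H22 HLL HLS1 HLS2 Ds Dq
        XLL XLS1 XLS2 XLbS1 XLbS2 X11 X12 X22])
  then have "\<bar>2 * g\<bar> * \<bar>?E\<bar> \<le> 50 * ?Q"
    by (simp only: abs_mult[of "2 * g"])
  moreover have "1/2 * \<bar>?E\<bar> \<le> \<bar>2 * g\<bar> * \<bar>?E\<bar>"
    using g_neg by (intro mult_right_mono) auto
  ultimately show ?thesis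
    by linarith
qed

lemma gLLb_eq: "(\<And>a b. h a b = h b a) \<Longrightarrow> gLLb h p = - 1/2 + Hlow h (Lv p) (Lbv p) / 4"
  unfolding gLLb_def HupLLb_def by (metis Hlow_sym)

lemma gLLb_less: "\<bar>HupLLb h p\<bar> < 1/4 \<Longrightarrow> gLLb h p < - 1/4"
  unfolding gLLb_def by (simp add: abs_less_iff)

lemma null_frame_estimate:
  fixes \<phi> :: "real^4 \<Rightarrow> real" and H :: "real^4 \<Rightarrow> 4 \<Rightarrow> 4 \<Rightarrow> real"
  assumes C: "C2 \<phi>" and H_sym: "\<And>a b. H p a b = H p b a" and H_small: "\<bar>HupLLb (H p) p\<bar> < 1/4"
    and r: "rad p > 0" and S1_0: "S1 $ 0 = 0" and S2_0: "S2 $ 0 = 0"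
    and S1_norm: "norm S1 = 1" and S2_norm: "norm S2 = 1"
    and S1_S2: "S1 \<bullet> S2 = 0" and S1_omg: "S1 \<bullet> omg p = 0" and S2_omg: "S2 \<bullet> omg p = 0"
  defines "\<psi> \<equiv> vf qv (\<lambda>y. rad y * \<phi> y)" and "g \<equiv> gLLb (H p) p"
  shows "\<bar>4 * vf sv \<psi> p - Hlow (H p) (Lv p) (Lv p) / (2 * g) * vf qv \<psi> p
        - (trbar (H p) S1 S2 + Hlow (H p) (Lv p) (Lbv p)) / (2 * g * rad p) * \<psi> p
        + rad p * boxg H \<phi> p / (2 * g)\<bar>
     \<le> 100 * (rad p * \<bar>lapw \<phi> p\<bar> + HLT (H p) p S1 S2 * (rad p * bardd_abs \<phi> p + dabs \<phi> p)
            + habs (H p) * (rad p * bar2_norm \<phi> p + bard_abs \<phi> p + \<bar>\<phi> p\<bar> / rad p))"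
proof -
  let ?h = "H p" and ?X = "hess \<phi> p"
  note box = boxg_eq_lapw[OF C r, of H, unfolded contraction_null_frame[OF r S1_0 S2_0 S1_norm
      S2_norm S1_S2 S1_omg S2_omg, of "H p" "hess \<phi> p", OF H_sym hess_sym[OF C]]]
  note L = abs_Lv_nth_le[OF r] and Lb = abs_Lbv_nth_le[OF r]
    and S1 = abs_nth_le_1[OF S1_norm] and S2 = abs_nth_le_1[OF S2_norm]
  have HLT: "\<bar>Hlow ?h (Lv p) (Lv p)\<bar> \<le> HLT ?h p S1 S2" "\<bar>Hlow ?h (Lv p) S1\<bar> \<le> HLT ?h p S1 S2"
    "\<bar>Hlow ?h (Lv p) S2\<bar> \<le> HLT ?h p S1 S2"
    by (simp_all add: HLT_def)
  have "S1 \<bullet> S1 = 1" "S2 \<bullet> S2 = 1"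
    using S1_norm S2_norm by (simp_all add: dot_square_norm)
  then have SS: "\<bar>rad p * bform ?X S1 S1 - dirv \<phi> (omg p) p\<bar> \<le> 9 * (rad p * bar2_norm \<phi> p)"
    "\<bar>rad p * bform ?X S1 S2\<bar> \<le> 9 * (rad p * bar2_norm \<phi> p)"
    "\<bar>rad p * bform ?X S2 S2 - dirv \<phi> (omg p) p\<bar> \<le> 9 * (rad p * bar2_norm \<phi> p)"
    using abs_rad_mult_bform_hess_tangent_tangent_le[OF C r S1_0 S1_omg S1_norm S1_0 S1_omg S1_norm]
      abs_rad_mult_bform_hess_tangent_tangent_le[OF C r S1_0 S1_omg S1_norm S2_0 S2_omg S2_norm]
      abs_rad_mult_bform_hess_tangent_tangent_le[OF C r S2_0 S2_omg S2_norm S2_0 S2_omg S2_norm] S1_S2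
    by simp_all
  show ?thesis
    unfolding trbar_def \<psi>_def g_def
    by (rule null_frame_error_estimate[OF r gLLb_eq[of "H p", OF H_sym] gLLb_less[OF H_small]
        vf_qv_rad_mult[OF C r] vf_sv_vf_qv_rad_mult[OF C r] vf_qv_vf_qv_rad_mult[OF C r]
        dirv_omg_eq_vf_sv_add_vf_qv[OF C r] box
        abs_Hlow_le_habs[OF L Lb] abs_Hlow_le_habs[OF Lb Lb] abs_Hlow_le_habs[OF Lb S1]
        abs_Hlow_le_habs[OF Lb S2] abs_Hlow_le_habs[OF S1 S1] abs_Hlow_le_habs[OF S1 S2]
        abs_Hlow_le_habs[OF S2 S2] HLT abs_vf_sv_le_bard_abs[OF C r] abs_vf_qv_le_dabs[OF C r]
        abs_bform_hess_Lv_Lv_le[OF C r]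
        abs_rad_mult_bform_hess_Lv_tangent_le[OF C r S1_0 S1_omg S1_norm]
        abs_rad_mult_bform_hess_Lv_tangent_le[OF C r S2_0 S2_omg S2_norm]
        abs_bform_hess_Lbv_tangent_le[OF C r S1_0 S1_omg S1_norm]
        abs_bform_hess_Lbv_tangent_le[OF C r S2_0 S2_omg S2_norm] SS])
qed

theorem corollary4p4:
  shows "\<exists>C>0. \<forall>(\<phi>::real^4 \<Rightarrow> real) (H::real^4 \<Rightarrow> 4 \<Rightarrow> 4 \<Rightarrow> real) (F::real^4 \<Rightarrow> real) p S1 S2.
    C2 \<phi> \<longrightarrow>
    (\<forall>q a b. H q a b = H q b a) \<longrightarrow>
    (\<forall>q. \<bar>HupLLb (H q) q\<bar> < 1/4) \<longrightarrow>
    (\<forall>q. F q = boxg H \<phi> q) \<longrightarrow>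
    rad p > 0 \<longrightarrow>
    S1 $ 0 = 0 \<longrightarrow> S2 $ 0 = 0 \<longrightarrow> norm S1 = 1 \<longrightarrow> norm S2 = 1 \<longrightarrow>
    S1 \<bullet> S2 = 0 \<longrightarrow> S1 \<bullet> omg p = 0 \<longrightarrow> S2 \<bullet> omg p = 0 \<longrightarrow>
    (let h = H p; g = gLLb h p; r = rad p;
         \<psi> = vf qv (\<lambda>y. rad y * \<phi> y) in
     \<bar>4 * vf sv \<psi> p - Hlow h (Lv p) (Lv p) / (2 * g) * vf qv \<psi> p
        - (trbar h S1 S2 + Hlow h (Lv p) (Lbv p)) / (2 * g * r) * \<psi> p
        + r * F p / (2 * g)\<bar>
     \<le> C * (r * \<bar>lapw \<phi> p\<bar>
            + HLT h p S1 S2 * (r * bardd_abs \<phi> p + dabs \<phi> p)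
            + habs h * (r * bar2_norm \<phi> p + bard_abs \<phi> p + \<bar>\<phi> p\<bar> / r)))"
proof (intro exI[of _ 100] conjI allI impI)
  fix \<phi> :: "real^4 \<Rightarrow> real" and H :: "real^4 \<Rightarrow> 4 \<Rightarrow> 4 \<Rightarrow> real" and F :: "real^4 \<Rightarrow> real"
    and p S1 S2 :: "real^4"
  assume "C2 \<phi>" "\<forall>q a b. H q a b = H q b a" "\<forall>q. \<bar>HupLLb (H q) q\<bar> < 1/4"
    "\<forall>q. F q = boxg H \<phi> q" "rad p > 0" "S1 $ 0 = 0" "S2 $ 0 = 0" "norm S1 = 1" "norm S2 = 1"
    "S1 \<bullet> S2 = 0" "S1 \<bullet> omg p = 0" "S2 \<bullet> omg p = 0"
  then show "let h = H p; g = gLLb h p; r = rad p; \<psi> = vf qv (\<lambda>y. rad y * \<phi> y) in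
     \<bar>4 * vf sv \<psi> p - Hlow h (Lv p) (Lv p) / (2 * g) * vf qv \<psi> p
        - (trbar h S1 S2 + Hlow h (Lv p) (Lbv p)) / (2 * g * r) * \<psi> p + r * F p / (2 * g)\<bar>
     \<le> 100 * (r * \<bar>lapw \<phi> p\<bar> + HLT h p S1 S2 * (r * bardd_abs \<phi> p + dabs \<phi> p)
            + habs h * (r * bar2_norm \<phi> p + bard_abs \<phi> p + \<bar>\<phi> p\<bar> / r))"
    unfolding Let_def using null_frame_estimate[of \<phi> H p S1 S2] by simp
qed simp

end
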